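(* If $\bar\alpha,\bar\beta\in\{0,1\}^k$ and $\bar\alpha\ne\bar\beta$, then $F_{\bar\alpha}\cap F_{\bar\beta}=\varnothing$, $$d_H(F_{\bar\alpha},F_{\bar\beta})<\frac{3\sqrt5}{5^{|\bar\alpha\wedge\bar\beta|}},\qquad d(F_{\bar\alpha},F_{\bar\beta})\ge\frac{1}{5^{|\bar\alpha\wedge\bar\beta|+1}}.$$
   Context: Let $I=[0,1]^3$. Let $\mathcal D_0=\{(i,2,2),(2,i,2),(2,2,i): i=0,1,2,3,4\}$ and $\mathcal D_1=\{d\in\{0,\ldots,4\}^3:\ \text{at least two coordinates of } d \text{ lie in }\{0,4\}\}$. For $i=0,1$ let $T_i(A)=\bigcup_{d\in\mathcal D_i}\frac{d+A}{5}$, and for $\bar\alpha=\alpha_1\cdots\alpha_k$ let $F_{\bar\alpha}=T_{\alpha_1}\circ\cdots\circ T_{\alpha_k}(I)$. $|\bar\alpha\wedge\bar\beta|$ denotes the length of the longest common initial segment of $\bar\alpha$ and $\bar\beta$. $d_H$ is the Hausdorff distance and $d(A,B)=\inf\{|a-b|:a\in A,b\in B\}$. *)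

theory Defs
  imports "HOL-Analysis.Analysis"
begin

definition pt3 :: "nat \<Rightarrow> nat \<Rightarrow> nat \<Rightarrow> real^3" where
  "pt3 a b c = vector [real a, real b, real c]"

definition unit_cube :: "(real^3) set" where
  "unit_cube = cbox 0 1"

definition D0 :: "(real^3) set" where
  "D0 = {pt3 i 2 2 | i. i \<le> 4} \<union> {pt3 2 i 2 | i. i \<le> 4} \<union> {pt3 2 2 i | i. i \<le> 4}"

definition D1 :: "(real^3) set" where
  "D1 = {pt3 a b c | a b c. a \<le> 4 \<and> b \<le> 4 \<and> c \<le> 4 \<and>
          ((a \<in> {0,4} \<and> b \<in> {0,4}) \<or> (a \<in> {0,4} \<and> c \<in> {0,4}) \<or> (b \<in> {0,4} \<and> c \<in> {0,4}))}"

definition Tmap :: "(real^3) set \<Rightarrow> (real^3) set \<Rightarrow> (real^3) set" where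
  "Tmap D A = (\<Union>d\<in>D. (\<lambda>x. (1/5) *\<^sub>R (d + x)) ` A)"

definition T :: "nat \<Rightarrow> (real^3) set \<Rightarrow> (real^3) set" where
  "T i = (if i = 0 then Tmap D0 else Tmap D1)"

definition F :: "nat list \<Rightarrow> (real^3) set" where
  "F \<alpha> = foldr T \<alpha> unit_cube"

fun common_prefix_len :: "'a list \<Rightarrow> 'a list \<Rightarrow> nat" where
  "common_prefix_len (x # xs) (y # ys) = (if x = y then Suc (common_prefix_len xs ys) else 0)"
| "common_prefix_len _ _ = 0"

definition hausdorff_dist :: "'a::metric_space set \<Rightarrow> 'a set \<Rightarrow> real" where
  "hausdorff_dist A B = max (SUP a\<in>A. infdist a B) (SUP b\<in>B. infdist b A)"

end

theory Submission
  imports Defs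
begin

text \<open>
  Splitting a word into a prefix of length m and a rest, its F is the union of the cells
  5^-m (v + A) over a set of integer offsets v determined by the prefix alone, where A \<subseteq> I is
  F of the rest. If \<alpha> and \<beta> share a prefix of length m, every point of F \<alpha> therefore lies within
  diam I / 5^m \<le> 3 / 5^m of F \<beta> and vice versa. At letter m + 1 one word uses a digit of D0
  and the other one of D1; these differ by exactly 2 in some coordinate (a D0 digit has two
  coordinates equal to 2, a D1 digit two in {0, 4}). In that coordinate points of F \<alpha> and
  F \<beta> differ by 5^-(m+1) (5n +/- 2 + t) with n an integer and |t| \<le> 1, hence by at least
  5^-(m+1).
\<close>

lemma pt3_nth [simp]: "pt3 a b c $ 1 = real a" "pt3 a b c $ 2 = real b" "pt3 a b c $ 3 = real c"
  by (simp_all add: pt3_def)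

definition digits :: "nat \<Rightarrow> (real^3) set" where
  "digits c = (if c = 0 then D0 else D1)"

lemma T_eq_Tmap_digits: "T c = Tmap (digits c)"
  by (simp add: T_def digits_def)

lemma digits_nth_bounds: "d \<in> digits c \<Longrightarrow> d $ i \<in> \<int> \<and> 0 \<le> d $ i \<and> d $ i \<le> 4"
  using exhaust_3[of i] by (auto simp: digits_def D0_def D1_def split: if_splits)

lemma digits_nonempty: "digits c \<noteq> {}"
proof -
  have "pt3 2 2 2 \<in> D0" "pt3 0 0 0 \<in> D1"
    unfolding D0_def D1_def by fastforce+
  then show ?thesis by (auto simp: digits_def)
qed

lemma D0_D1_separated: "d \<in> D0 \<Longrightarrow> d' \<in> D1 \<Longrightarrow> \<exists>i. \<bar>d $ i - d' $ i\<bar> = 2"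
  using forall_3[of "\<lambda>i. \<bar>d $ i - d' $ i\<bar> \<noteq> 2"] by (auto simp: D0_def D1_def)

lemma digits_separated:
  assumes "x \<noteq> y" "x \<in> {0, 1}" "y \<in> {0, 1}" "d \<in> digits x" "d' \<in> digits y"
  shows "\<exists>i. \<bar>d $ i - d' $ i\<bar> = 2"
  using assms D0_D1_separated[of d d'] D0_D1_separated[of d' d]
  by (auto simp: digits_def abs_minus_commute)

fun offsets :: "nat list \<Rightarrow> (real^3) set" where
  "offsets [] = {0}"
| "offsets (c # g) = (\<Union>d\<in>digits c. (\<lambda>v. 5 ^ length g *\<^sub>R d + v) ` offsets g)"

lemma offsets_nth_Ints: "v \<in> offsets g \<Longrightarrow> v $ i \<in> \<int>"
  by (induction g arbitrary: v) (auto intro!: Ints_add Ints_mult dest: digits_nth_bounds)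

lemma foldr_T_eq_UN_offsets:
  "foldr T g A = (\<Union>v\<in>offsets g. (\<lambda>x. (1 / 5 ^ length g) *\<^sub>R (v + x)) ` A)"
proof (induction g)
  case Nil
  then show ?case by simp
next
  case (Cons c g)
  have rescale: "(1/5) *\<^sub>R (d + (1 / 5 ^ length g) *\<^sub>R (v + x)) =
      (1 / 5 ^ Suc (length g)) *\<^sub>R ((5 ^ length g *\<^sub>R d + v) + x)" for d v x :: "real^3"
    by (simp add: algebra_simps)
  have "foldr T (c # g) A = Tmap (digits c) (foldr T g A)"
    by (simp add: T_eq_Tmap_digits)
  also have "\<dots> = (\<Union>d\<in>digits c. \<Union>v\<in>offsets g.
      (\<lambda>x. (1 / 5 ^ Suc (length g)) *\<^sub>R ((5 ^ length g *\<^sub>R d + v) + x)) ` A)"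
    by (simp add: Cons Tmap_def image_UN image_image rescale)
  finally show ?case
    by (simp add: UN_UN_flatten)
qed

lemma T_subset_unit_cube:
  assumes "A \<subseteq> unit_cube"
  shows "T c A \<subseteq> unit_cube"
proof
  fix p assume "p \<in> T c A"
  then obtain d x where d: "d \<in> digits c" and "x \<in> unit_cube" and "p = (1/5) *\<^sub>R (d + x)"
    using assms by (auto simp: T_eq_Tmap_digits Tmap_def)
  then have "0 \<le> p $ i \<and> p $ i \<le> 1" for i
    using digits_nth_bounds[OF d, of i] by (auto simp: unit_cube_def mem_box_cart dest!: spec[of _ i])
  then show "p \<in> unit_cube"
    by (simp add: unit_cube_def mem_box_cart)
qed

lemma T_nonempty: "A \<noteq> {} \<Longrightarrow> T c A \<noteq> {}"
  using digits_nonempty[of c] by (auto simp: T_eq_Tmap_digits Tmap_def)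

lemma F_subset_unit_cube: "F g \<subseteq> unit_cube"
  by (induction g) (auto simp: F_def T_subset_unit_cube)

lemma F_nonempty: "F g \<noteq> {}"
proof -
  have "0 \<in> unit_cube" by (simp add: unit_cube_def mem_box_cart)
  then show ?thesis by (induction g) (auto simp: F_def T_nonempty)
qed

lemma common_prefix_split:
  assumes "length a = length b" "a \<noteq> b"
  obtains g x y a' b' where "a = g @ x # a'" "b = g @ y # b'" "x \<noteq> y"
    "common_prefix_len a b = length g"
  using assms
proof (induction a b arbitrary: thesis rule: common_prefix_len.induct)
  case (1 x xs y ys)
  show ?case
  proof (cases "x = y")
    case True
    obtain g x' y' a' b' where "xs = g @ x' # a'" "ys = g @ y' # b'" "x' \<noteq> y'"
      "common_prefix_len xs ys = length g"
      by (rule "1.IH"[OF True]) (use "1.prems" True in auto)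
    then show ?thesis
      using "1.prems"(1)[of "x # g"] True by simp
  next
    case False
    then show ?thesis using "1.prems"(1)[of "[]"] by simp
  qed
qed auto

lemma two_le_abs_five_mult_add:
  fixes n e :: real
  assumes "n \<in> \<int>" "\<bar>e\<bar> = 2"
  shows "2 \<le> \<bar>5 * n + e\<bar>"
proof -
  obtain k where "n = of_int k" using assms(1) Ints_cases by blast
  then show ?thesis using assms(2) by (cases "k = 0"; cases "k > 0") auto
qed

lemma dist_unit_cube_le: "a \<in> unit_cube \<Longrightarrow> b \<in> unit_cube \<Longrightarrow> dist a b \<le> 3"
proof -
  assume "a \<in> unit_cube" "b \<in> unit_cube"
  then have "\<bar>(a - b) $ i\<bar> \<le> 1" for i
    by (auto simp: unit_cube_def mem_box_cart abs_le_iff dest!: spec[of _ i])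
  then have "(\<Sum>i\<in>UNIV. \<bar>(a - b) $ i\<bar>) \<le> 3"
    using sum_bounded_above[of UNIV "\<lambda>i. \<bar>(a - b) $ i\<bar>" 1] by simp
  then show ?thesis using norm_le_l1_cart[of "a - b"] by (simp add: dist_norm)
qed

lemma infdist_foldr_T_le:
  assumes "A \<subseteq> unit_cube" "B \<subseteq> unit_cube" "B \<noteq> {}" "p \<in> foldr T g A"
  shows "infdist p (foldr T g B) \<le> 3 / 5 ^ length g"
proof -
  let ?cell = "\<lambda>v x. (1 / 5 ^ length g) *\<^sub>R (v + x)"
  obtain v a where v: "v \<in> offsets g" and "a \<in> A" and p: "p = ?cell v a"
    using assms(4) by (auto simp: foldr_T_eq_UN_offsets)
  obtain b where "b \<in> B" using assms(3) by auto
  then have q: "?cell v b \<in> foldr T g B"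
    using v by (auto simp: foldr_T_eq_UN_offsets)
  have "dist p (?cell v b) = dist a b / 5 ^ length g"
    by (simp add: p dist_norm norm_minus_commute flip: scaleR_diff_right)
  also have "\<dots> \<le> 3 / 5 ^ length g"
    using dist_unit_cube_le \<open>a \<in> A\<close> \<open>b \<in> B\<close> assms(1,2) by (simp add: divide_right_mono subset_iff)
  finally show ?thesis
    using infdist_le[OF q, of p] by linarith
qed

lemma dist_foldr_T_ge:
  assumes "x \<noteq> y" "x \<in> {0, 1}" "y \<in> {0, 1}" "A \<subseteq> unit_cube" "B \<subseteq> unit_cube"
    and "p \<in> foldr T g (T x A)" "q \<in> foldr T g (T y B)"
  shows "1 / 5 ^ (length g + 1) \<le> dist p q"
proof -
  let ?point = "\<lambda>v d a. (1 / 5 ^ length g) *\<^sub>R (v + (1/5) *\<^sub>R (d + a))"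
  obtain v d a where v: "v \<in> offsets g" and d: "d \<in> digits x" and a: "a \<in> unit_cube"
    and p: "p = ?point v d a"
    using assms(4,6) by (auto simp: foldr_T_eq_UN_offsets T_eq_Tmap_digits Tmap_def)
  obtain w d' b where w: "w \<in> offsets g" and d': "d' \<in> digits y" and b: "b \<in> unit_cube"
    and q: "q = ?point w d' b"
    using assms(5,7) by (auto simp: foldr_T_eq_UN_offsets T_eq_Tmap_digits Tmap_def)
  obtain i where e: "\<bar>d $ i - d' $ i\<bar> = 2"
    using digits_separated[OF assms(1-3) d d'] by blast
  have n: "v $ i - w $ i \<in> \<int>"
    using offsets_nth_Ints[OF v] offsets_nth_Ints[OF w] by (rule Ints_diff)
  have t: "\<bar>a $ i - b $ i\<bar> \<le> 1"
    using a b by (auto simp: unit_cube_def mem_box_cart abs_le_iff dest!: spec[of _ i])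
  have "(p - q) $ i = (5 * (v $ i - w $ i) + (d $ i - d' $ i) + (a $ i - b $ i)) / 5 ^ (length g + 1)"
    by (simp add: p q field_simps)
  moreover have "1 \<le> \<bar>5 * (v $ i - w $ i) + (d $ i - d' $ i) + (a $ i - b $ i)\<bar>"
    using two_le_abs_five_mult_add[OF n e] t by linarith
  ultimately have "1 / 5 ^ (length g + 1) \<le> \<bar>(p - q) $ i\<bar>"
    by (simp add: divide_right_mono)
  also have "\<dots> \<le> dist p q"
    using component_le_norm_cart[of "p - q" i] by (simp add: dist_norm)
  finally show ?thesis .
qed

lemma hausdorff_dist_le:
  assumes "A \<noteq> {}" "B \<noteq> {}"
    and "\<And>a. a \<in> A \<Longrightarrow> infdist a B \<le> r" "\<And>b. b \<in> B \<Longrightarrow> infdist b A \<le> r"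
  shows "hausdorff_dist A B \<le> r"
  using assms by (simp add: hausdorff_dist_def cSUP_least)

theorem lemma2:
  fixes \<alpha> \<beta> :: "nat list" and k :: nat
  assumes "length \<alpha> = k" and "length \<beta> = k"
    and "set \<alpha> \<subseteq> {0, 1}" and "set \<beta> \<subseteq> {0, 1}"
    and "\<alpha> \<noteq> \<beta>"
  shows "F \<alpha> \<inter> F \<beta> = {}
      \<and> hausdorff_dist (F \<alpha>) (F \<beta>) < 3 * sqrt 5 / 5 ^ common_prefix_len \<alpha> \<beta>
      \<and> setdist (F \<alpha>) (F \<beta>) \<ge> 1 / 5 ^ (common_prefix_len \<alpha> \<beta> + 1)"
proof -
  obtain g x y a' b' where \<alpha>: "\<alpha> = g @ x # a'" and \<beta>: "\<beta> = g @ y # b'" and "x \<noteq> y"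
    and prefix: "common_prefix_len \<alpha> \<beta> = length g"
    using common_prefix_split assms(1,2,5) by metis
  have "x \<in> {0, 1}" "y \<in> {0, 1}" using assms(3,4) \<alpha> \<beta> by auto
  have F\<alpha>: "F \<alpha> = foldr T g (T x (F a'))" and F\<beta>: "F \<beta> = foldr T g (T y (F b'))"
    by (simp_all add: \<alpha> \<beta> F_def)
  have cells: "T x (F a') \<subseteq> unit_cube" "T y (F b') \<subseteq> unit_cube"
    "T x (F a') \<noteq> {}" "T y (F b') \<noteq> {}"
    by (simp_all add: T_subset_unit_cube F_subset_unit_cube T_nonempty F_nonempty)
  have "1 / 5 ^ (length g + 1) \<le> dist p q" if "p \<in> F \<alpha>" "q \<in> F \<beta>" for p q
    using dist_foldr_T_ge[OF \<open>x \<noteq> y\<close> \<open>x \<in> {0, 1}\<close> \<open>y \<in> {0, 1}\<close>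
        F_subset_unit_cube F_subset_unit_cube] that F\<alpha> F\<beta>
    by simp
  then have setdist: "1 / 5 ^ (length g + 1) \<le> setdist (F \<alpha>) (F \<beta>)"
    using F_nonempty by (intro le_setdistI) blast+
  then have disjoint: "F \<alpha> \<inter> F \<beta> = {}"
    by (smt (verit) disjoint_iff setdist_eq_0I zero_less_divide_1_iff zero_less_power)
  have "hausdorff_dist (F \<alpha>) (F \<beta>) \<le> 3 / 5 ^ length g"
    using F_nonempty[of \<alpha>] F_nonempty[of \<beta>]
      infdist_foldr_T_le[OF cells(1,2,4)] infdist_foldr_T_le[OF cells(2,1,3)]
    unfolding F\<alpha> F\<beta> by (intro hausdorff_dist_le)
  also have "\<dots> < 3 * sqrt 5 / 5 ^ length g"
    by (simp add: divide_strict_right_mono)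
  finally show ?thesis
    using disjoint setdist prefix by simp
qed

end
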